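(* Let $n \in \mathbb{Z}^+$ and consider, in the ring $\mathbb{Z}$, the Frobenius template $(\mathbb{N}, (n + \mathbb{N}) \cup \{0\}, \mathbb{N})$. If $a_1, \dots, a_k \in \mathbb{N}$ are coprime, then \[ (a_1 + \dots + a_k)n + \chi(a_1, \dots, a_k) + \mathbb{N} \subseteq \mathrm{Frob}(a_1, \dots, a_k), \] where $\mathrm{Frob}$ is taken with respect to this template.
   Context: $\mathbb{N}$ denotes the nonnegative integers and $\mathbb{Z}^+ = \mathbb{N}\setminus\{0\}$; for $S \subseteq \mathbb{Z}$ and $g \in \mathbb{Z}$, $g + S = \{g + s : s \in S\}$. Integers $a_1,\dots,a_k \in \mathbb{N}$ are coprime if $\gcd(a_1,\dots,a_k)=1$. For coprime $a_1, \dots, a_k \in \mathbb{N}$, $\chi(a_1, \dots, a_k)$ denotes the least $w \in \mathbb{N}$ such that $w + \mathbb{N} \subseteq \{\sum_{i=1}^k \lambda_i a_i : \lambda_i \in \mathbb{N}\}$ (the classical Frobenius number plus one). For the template $(\mathbb{N}, (n + \mathbb{N}) \cup \{0\}, \mathbb{N})$: $MN(a_1, \dots, a_k) = \{\sum_{i=1}^k \lambda_i a_i : \lambda_1, \dots, \lambda_k \in (n + \mathbb{N}) \cup \{0\}\}$ and $\mathrm{Frob}(a_1, \dots, a_k) = \{w \in \mathbb{Z} : w + \mathbb{N} \subseteq MN(a_1, \dots, a_k)\}$. *)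

theory Defs
  imports Main
begin

text \<open>Tuples a_1..a_k are represented as a function a :: nat => nat restricted to indices i < k.\<close>

definition combs :: "nat set \<Rightarrow> (nat \<Rightarrow> nat) \<Rightarrow> nat \<Rightarrow> int set" where
  "combs L a k = {(\<Sum>i<k. int (lam i) * int (a i)) | lam. \<forall>i<k. lam i \<in> L}"

text \<open>chi(a_1..a_k): least w in N with w + N contained in the numerical semigroup (Frobenius number plus one).\<close>
definition chi :: "(nat \<Rightarrow> nat) \<Rightarrow> nat \<Rightarrow> nat" where
  "chi a k = (LEAST w::nat. \<forall>m::nat. int (w + m) \<in> combs UNIV a k)"

definition MN :: "nat \<Rightarrow> (nat \<Rightarrow> nat) \<Rightarrow> nat \<Rightarrow> int set" where
  "MN n a k = combs ({n..} \<union> {0}) a k"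

definition Frob :: "nat \<Rightarrow> (nat \<Rightarrow> nat) \<Rightarrow> nat \<Rightarrow> int set" where
  "Frob n a k = {w::int. \<forall>m::nat. w + int m \<in> MN n a k}"

end

theory Submission
  imports Defs
begin

text \<open>Shifting every coefficient of an unrestricted combination up by \<open>n\<close> lands in the template
  \<open>(n + \<nat>) \<union> {0}\<close> and adds exactly \<open>(a\<^sub>1 + \<dots> + a\<^sub>k) n\<close>, so the claim reduces to
  the existence of the conductor \<open>\<chi>\<close>. The conductor exists
  because, by Bezout, some integer combination \<open>\<Sum> c\<^sub>i a\<^sub>i\<close> equals 1, and adding it \<open>r\<close> times to
  \<open>q (a\<^sub>1 + \<dots> + a\<^sub>k)\<close> keeps every coefficient \<open>q + r c\<^sub>i\<close> nonnegative once \<open>q\<close> is large.\<close>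

lemma Gcd_lessThan_int_combination:
  "\<exists>c::nat \<Rightarrow> int. (\<Sum>i<k. c i * int (a i)) = int (Gcd (a ` {..<k}))"
proof (induction k)
  case 0
  then show ?case by simp
next
  case (Suc k)
  then obtain c where c: "(\<Sum>i<k. c i * int (a i)) = int (Gcd (a ` {..<k}))" by blast
  obtain u v where uv:
    "u * int (a k) + v * int (Gcd (a ` {..<k})) = gcd (int (a k)) (int (Gcd (a ` {..<k})))"
    using bezout_int by blast
  define c' where "c' = (\<lambda>i. if i = k then u else v * c i)"
  have "(\<Sum>i<Suc k. c' i * int (a i)) = u * int (a k) + v * (\<Sum>i<k. c i * int (a i))"
    by (simp add: c'_def sum_distrib_left mult.assoc)
  also have "\<dots> = int (Gcd (a ` {..<Suc k}))"
    using uv c by (simp add: lessThan_Suc Gcd_insert gcd_int_int_eq)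
  finally show ?case by blast
qed

lemma large_in_combs_UNIV:
  fixes c :: "nat \<Rightarrow> int"
  assumes one: "(\<Sum>i<k. c i * int (a i)) = 1"
    and bound: "\<And>i. i < k \<Longrightarrow> \<bar>c i\<bar> \<le> int B"
    and large: "(\<Sum>i<k. a i) * (\<Sum>i<k. a i) * B \<le> N"
  shows "int N \<in> combs UNIV a k"
proof -
  define s where "s = (\<Sum>i<k. a i)"
  have "s > 0"
  proof (rule ccontr)
    assume "\<not> s > 0"
    then have "\<forall>i<k. a i = 0" by (simp add: s_def)
    with one show False by simp
  qed
  define q r where "q = N div s" and "r = N mod s"
  have N_qr: "N = q * s + r" by (simp add: q_def r_def)
  have "r < s" using \<open>s > 0\<close> by (simp add: r_def)
  have "s * B \<le> q"
    using large \<open>s > 0\<close> unfolding q_def s_def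
    by (metis div_le_mono div_mult_self1_is_m mult.assoc mult.commute)
  have nonneg: "int q + int r * c i \<ge> 0" if "i < k" for i
  proof -
    have "\<bar>int r * c i\<bar> \<le> int s * int B"
      using bound[OF that] \<open>r < s\<close> by (simp add: abs_mult mult_mono)
    also have "\<dots> \<le> int q" using \<open>s * B \<le> q\<close> by (metis of_nat_le_iff of_nat_mult)
    finally show ?thesis by linarith
  qed
  define lam where "lam = (\<lambda>i. nat (int q + int r * c i))"
  have "(\<Sum>i<k. int (lam i) * int (a i)) = (\<Sum>i<k. (int q + int r * c i) * int (a i))"
    using nonneg by (intro sum.cong) (auto simp: lam_def)
  also have "\<dots> = int q * (\<Sum>i<k. int (a i)) + int r * (\<Sum>i<k. c i * int (a i))"
    by (simp add: algebra_simps sum.distrib sum_distrib_left)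
  also have "\<dots> = int N" using one N_qr by (simp add: s_def)
  finally have "int N = (\<Sum>i<k. int (lam i) * int (a i))" ..
  then show ?thesis unfolding combs_def by blast
qed

lemma ex_conductor_combs_UNIV:
  assumes "Gcd (a ` {..<k}) = 1"
  shows "\<exists>w. \<forall>m. int (w + m) \<in> combs UNIV a k"
proof -
  obtain c where one: "(\<Sum>i<k. c i * int (a i)) = 1"
    using Gcd_lessThan_int_combination[of a k] assms by auto
  define B where "B = (\<Sum>i<k. nat \<bar>c i\<bar>)"
  have "\<bar>c i\<bar> \<le> int B" if "i < k" for i
  proof -
    have "nat \<bar>c i\<bar> \<le> B" unfolding B_def using that by (intro member_le_sum) auto
    then show ?thesis by linarith
  qed
  with one show ?thesis
    by (intro exI[of _ "(\<Sum>i<k. a i) * (\<Sum>i<k. a i) * B"] allI large_in_combs_UNIV) auto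
qed

lemma chi_add_in_combs_UNIV:
  assumes "Gcd (a ` {..<k}) = 1"
  shows "int (chi a k + m) \<in> combs UNIV a k"
proof -
  have "\<forall>m. int (chi a k + m) \<in> combs UNIV a k"
    unfolding chi_def using ex_conductor_combs_UNIV[OF assms] by (rule LeastI_ex)
  then show ?thesis by blast
qed

lemma shift_combs_UNIV_in_MN:
  assumes "x \<in> combs UNIV a k"
  shows "int ((\<Sum>i<k. a i) * n) + x \<in> MN n a k"
proof -
  obtain mu where x: "x = (\<Sum>i<k. int (mu i) * int (a i))"
    using assms unfolding combs_def by blast
  have "int ((\<Sum>i<k. a i) * n) + x = (\<Sum>i<k. int (mu i + n) * int (a i))"
    by (simp add: x algebra_simps sum.distrib sum_distrib_left)
  then show ?thesis unfolding MN_def combs_def by (auto intro!: exI[of _ "\<lambda>i. mu i + n"])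
qed

theorem proposition3p1:
  fixes n k :: nat and a :: "nat \<Rightarrow> nat"
  assumes "n > 0"
    and "Gcd (a ` {..<k}) = 1"
  shows "{int ((\<Sum>i<k. a i) * n + chi a k + m) | m::nat. True} \<subseteq> Frob n a k"
proof clarify
  fix m
  have "int ((\<Sum>i<k. a i) * n) + int (chi a k + (m + m')) \<in> MN n a k" for m'
    using shift_combs_UNIV_in_MN chi_add_in_combs_UNIV[OF assms(2)] by blast
  then show "int ((\<Sum>i<k. a i) * n + chi a k + m) \<in> Frob n a k"
    unfolding Frob_def by (simp add: add.assoc)
qed

end
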